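(* Let $\Psi=(\psi_k)_{k\in\mathbb N}$ with $\psi_k\in(-\pi/2,\pi/2)$, and let $F_n=i\tan(\psi_{|n|})$ for $n\in\mathbb Z$. For $d\ge0$ let $G_d$ be the $SU(2)$ nonlinear Fourier series of the finitely supported sequence $(F_n\mathbf 1_{\{-d\le n\le d\}})_{n\in\mathbb Z}$. For $x\in[0,1]$ let $\theta$ be the unique number in $[0,\pi/2]$ with $\cos\theta=x$ and set $z=e^{2i\theta}$. Then for every $d\ge0$, $$M\,U_d(\Psi,x)\,M=\begin{pmatrix}e^{id\theta}&0\\0&e^{-id\theta}\end{pmatrix}G_d(z)\begin{pmatrix}e^{id\theta}&0\\0&e^{-id\theta}\end{pmatrix}.$$
   Context: $W(x)=\begin{pmatrix}x& i\sqrt{1-x^2}\\ i\sqrt{1-x^2}& x\end{pmatrix}$, $Z=\begin{pmatrix}1&0\\0&-1\end{pmatrix}$, $M=2^{-1/2}\begin{pmatrix}1&1\\1&-1\end{pmatrix}$. $U_0(\Psi,x)=e^{i\psi_0Z}$ and $U_d(\Psi,x)=e^{i\psi_dZ}W(x)U_{d-1}(\Psi,x)W(x)e^{i\psi_dZ}$ for $d\ge1$. For a finitely supported sequence $F:\mathbb Z\to\mathbb C$, its $SU(2)$ nonlinear Fourier series is the matrix-valued function $G(z)=\prod_{k}(1+|F_k|^2)^{-1/2}\begin{pmatrix}1&F_kz^k\\-\overline{F_k}z^{-k}&1\end{pmatrix}$, where the (finite) product is ordered with $k$ increasing from left to right. *)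

theory Defs
  imports "HOL-Analysis.Analysis"
begin

type_synonym cmat = "complex^2^2"

definition mat2 :: "complex \<Rightarrow> complex \<Rightarrow> complex \<Rightarrow> complex \<Rightarrow> cmat" where
  "mat2 a b c d = (\<chi> i j. if i = 1 then (if j = 1 then a else b) else (if j = 1 then c else d))"

definition Wmat :: "real \<Rightarrow> cmat" where
  "Wmat x = mat2 (complex_of_real x) (\<i> * complex_of_real (sqrt (1 - x\<^sup>2)))
                 (\<i> * complex_of_real (sqrt (1 - x\<^sup>2))) (complex_of_real x)"

definition Mmat :: cmat where
  "Mmat = mat2 (1 / complex_of_real (sqrt 2)) (1 / complex_of_real (sqrt 2))
               (1 / complex_of_real (sqrt 2)) (- 1 / complex_of_real (sqrt 2))"

definition expZ :: "real \<Rightarrow> cmat" where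
  "expZ psi = mat2 (exp (\<i> * complex_of_real psi)) 0 0 (exp (- \<i> * complex_of_real psi))"

fun U :: "(nat \<Rightarrow> real) \<Rightarrow> nat \<Rightarrow> real \<Rightarrow> cmat" where
  "U \<Psi> 0 x = expZ (\<Psi> 0)"
| "U \<Psi> (Suc d) x = expZ (\<Psi> (Suc d)) ** Wmat x ** U \<Psi> d x ** Wmat x ** expZ (\<Psi> (Suc d))"

definition nlft_factor :: "complex \<Rightarrow> int \<Rightarrow> complex \<Rightarrow> cmat" where
  "nlft_factor Fk k z =
     (let c = complex_of_real (1 / sqrt (1 + (cmod Fk)\<^sup>2))
      in mat2 c (c * Fk * z powi k) (- c * cnj Fk * z powi (- k)) c)"

definition supp_radius :: "(int \<Rightarrow> complex) \<Rightarrow> nat" where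
  "supp_radius F = (LEAST N. \<forall>k. F k \<noteq> 0 \<longrightarrow> \<bar>k\<bar> \<le> int N)"

definition nlft :: "(int \<Rightarrow> complex) \<Rightarrow> complex \<Rightarrow> cmat" where
  "nlft F z = foldr (\<lambda>k A. nlft_factor (F k) k z ** A)
                 [- int (supp_radius F) .. int (supp_radius F)] (mat 1)"

end

theory Submission
  imports Defs
begin

text \<open>Conjugation by the Hadamard matrix M diagonalises W(x) to diag(e^{i\<theta>}, e^{-i\<theta>}) with
  cos \<theta> = x, and turns e^{i\<psi>Z} into the rotation with entries cos \<psi> and i sin \<psi>. The latter is
  precisely the normalised factor of the nonlinear Fourier series for F = i tan \<psi>, once the
  powers of z = e^{2i\<theta>} are absorbed into diagonal matrices. Since U_{d+1} wraps U_d in one more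
  factor on each side, and the symmetric ordered product over [-(d+1), d+1] wraps the one over
  [-d, d] in one more factor on each side, the identity follows by induction on d.\<close>

lemma mat2_mult:
  "mat2 a b c d ** mat2 a' b' c' d' = mat2 (a*a' + b*c') (a*b' + b*d') (c*a' + d*c') (c*b' + d*d')"
  unfolding matrix_matrix_mult_def mat2_def
  by (simp add: vec_eq_iff forall_2 UNIV_2 sum_2)

lemma mat_1_eq_mat2: "(mat 1 :: cmat) = mat2 1 0 0 1"
  unfolding mat_def mat2_def by (simp add: vec_eq_iff forall_2)

lemma mat2_eq_iff: "mat2 a b c d = mat2 a' b' c' d' \<longleftrightarrow> a = a' \<and> b = b' \<and> c = c' \<and> d = d'"
  unfolding mat2_def by (simp add: vec_eq_iff forall_2)

lemma exp_i_real: "exp (\<i> * complex_of_real t) = complex_of_real (cos t) + \<i> * complex_of_real (sin t)"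
  using cis_conv_exp[of t] by (simp add: cis.ctr Complex_eq)

lemma exp_minus_i_real: "exp (- \<i> * complex_of_real t) = complex_of_real (cos t) - \<i> * complex_of_real (sin t)"
  using exp_i_real[of "- t"] by simp

lemma sqrt2_mult_sqrt2: "complex_of_real (sqrt 2) * complex_of_real (sqrt 2) = 2"
  by (simp flip: of_real_mult)

lemma sqrt2_mult_sqrt2_mult: "complex_of_real (sqrt 2) * (complex_of_real (sqrt 2) * y) = 2 * y"
  by (simp add: mult.assoc[symmetric] sqrt2_mult_sqrt2)

lemma Mmat_mult_Mmat: "Mmat ** Mmat = mat 1"
  unfolding Mmat_def mat_1_eq_mat2 mat2_mult mat2_eq_iff
  by (simp add: field_simps sqrt2_mult_sqrt2 sqrt2_mult_sqrt2_mult)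

lemma Mmat_conj_Wmat:
  "Mmat ** Wmat x ** Mmat = mat2 (x + \<i> * sqrt (1 - x\<^sup>2)) 0 0 (x - \<i> * sqrt (1 - x\<^sup>2))"
  unfolding Mmat_def Wmat_def mat2_mult mat2_eq_iff
  by (simp add: field_simps sqrt2_mult_sqrt2 sqrt2_mult_sqrt2_mult)

lemma Mmat_conj_expZ: "Mmat ** expZ p ** Mmat = mat2 (cos p) (\<i> * sin p) (\<i> * sin p) (cos p)"
  unfolding Mmat_def expZ_def mat2_mult mat2_eq_iff exp_i_real exp_minus_i_real
  by (simp add: field_simps sqrt2_mult_sqrt2 sqrt2_mult_sqrt2_mult)

lemma nlft_factor_i_tan:
  assumes "cos p > 0"
  shows "nlft_factor (\<i> * complex_of_real (tan p)) k z
           = mat2 (cos p) (\<i> * sin p * z powi k) (\<i> * sin p * z powi (- k)) (cos p)"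
proof -
  have "1 + (tan p)\<^sup>2 = 1 / (cos p)\<^sup>2"
    using assms sin_cos_squared_add[of p] by (simp add: tan_def field_simps)
  then have "sqrt (1 + (tan p)\<^sup>2) = 1 / cos p"
    using assms by (simp add: real_sqrt_divide)
  then have norm_factor: "1 / sqrt (1 + (cmod (\<i> * complex_of_real (tan p)))\<^sup>2) = cos p"
    by (simp add: norm_mult)
  have "complex_of_real (cos p) * (\<i> * complex_of_real (tan p)) = \<i> * sin p"
    using assms by (simp add: tan_def flip: of_real_mult)
  then show ?thesis
    unfolding nlft_factor_def Let_def norm_factor mat2_eq_iff by (simp add: algebra_simps)
qed

lemma nlft_factor_zero: "nlft_factor 0 k z = mat 1"
  unfolding nlft_factor_def mat_1_eq_mat2 by simp

definition centered_prod :: "(int \<Rightarrow> cmat) \<Rightarrow> nat \<Rightarrow> cmat" where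
  "centered_prod g N = foldr (\<lambda>k A. g k ** A) [- int N .. int N] (mat 1)"

lemma foldr_matrix_mult:
  "foldr (\<lambda>k A. g k ** A) ks B = foldr (\<lambda>k A. g k ** A) ks (mat 1) ** B"
  by (induction ks) (simp_all add: matrix_mul_assoc)

lemma upto_symmetric_Suc:
  "[- int (Suc N) .. int (Suc N)] = - int (Suc N) # [- int N .. int N] @ [int (Suc N)]"
proof -
  have "[- int (Suc N) .. int (Suc N)] = - int (Suc N) # [- int N .. int (Suc N)]"
    by (subst upto_rec1) (auto simp: algebra_simps)
  also have "[- int N .. int (Suc N)] = [- int N .. int N] @ [int (Suc N)]"
    by (subst upto_rec2) auto
  finally show ?thesis .
qed

lemma centered_prod_0: "centered_prod g 0 = g 0"
  unfolding centered_prod_def by simp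

lemma centered_prod_Suc:
  "centered_prod g (Suc N) = g (- int (Suc N)) ** centered_prod g N ** g (int (Suc N))"
  unfolding centered_prod_def upto_symmetric_Suc
  by (simp add: foldr_matrix_mult[of g "[- int N .. int N]" "g (int (Suc N))"] matrix_mul_assoc
           del: of_nat_Suc)

lemma centered_prod_cong:
  "(\<And>k. \<bar>k\<bar> \<le> int N \<Longrightarrow> g k = h k) \<Longrightarrow> centered_prod g N = centered_prod h N"
  unfolding centered_prod_def by (intro foldr_cong) auto

lemma centered_prod_radius_mono:
  assumes "\<And>k. \<bar>k\<bar> > int s \<Longrightarrow> g k = mat 1" and "s \<le> N"
  shows "centered_prod g N = centered_prod g s"
  using assms(2)
proof (induction N rule: dec_induct)
  case base
  then show ?case by simp
next
  case (step n)
  have "g (- int (Suc n)) = mat 1" "g (int (Suc n)) = mat 1"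
    using step assms(1) by auto
  with step show ?case by (simp add: centered_prod_Suc)
qed

lemma nlft_eq_centered_prod:
  assumes "\<And>k. F k \<noteq> 0 \<Longrightarrow> \<bar>k\<bar> \<le> int N"
  shows "nlft F z = centered_prod (\<lambda>k. nlft_factor (F k) k z) N"
proof -
  have supp: "\<forall>k. F k \<noteq> 0 \<longrightarrow> \<bar>k\<bar> \<le> int N"
    using assms by blast
  have radius: "\<forall>k. F k \<noteq> 0 \<longrightarrow> \<bar>k\<bar> \<le> int (supp_radius F)"
    unfolding supp_radius_def by (rule LeastI[of _ N]) (rule supp)
  have "supp_radius F \<le> N"
    unfolding supp_radius_def by (rule Least_le) (rule supp)
  then have "centered_prod (\<lambda>k. nlft_factor (F k) k z) N
               = centered_prod (\<lambda>k. nlft_factor (F k) k z) (supp_radius F)"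
    by (rule centered_prod_radius_mono[rotated]) (metis radius nlft_factor_zero not_le)
  then show ?thesis
    unfolding nlft_def centered_prod_def by simp
qed

definition diag_power :: "complex \<Rightarrow> nat \<Rightarrow> cmat" where
  "diag_power a n = mat2 (a ^ n) 0 0 (inverse a ^ n)"

lemma Mmat_conj_U_eq_centered_prod:
  fixes \<Psi> :: "nat \<Rightarrow> real"
  assumes cos_pos: "\<And>k. cos (\<Psi> k) > 0" and "a \<noteq> 0"
    and W: "Mmat ** Wmat x ** Mmat = mat2 a 0 0 (inverse a)"
  defines "g \<equiv> \<lambda>k. nlft_factor (\<i> * complex_of_real (tan (\<Psi> (nat \<bar>k\<bar>)))) k (a\<^sup>2)"
  shows "Mmat ** U \<Psi> d x ** Mmat = diag_power a d ** centered_prod g d ** diag_power a d"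
proof (induction d)
  case 0
  show ?case
    by (simp add: g_def Mmat_conj_expZ diag_power_def centered_prod_0
        nlft_factor_i_tan[OF cos_pos] mat2_mult)
next
  case (Suc d)
  let ?MEM = "Mmat ** expZ (\<Psi> (Suc d)) ** Mmat" and ?MWM = "Mmat ** Wmat x ** Mmat"
  have U_Suc_conj: "Mmat ** U \<Psi> (Suc d) x ** Mmat
          = ?MEM ** ?MWM ** (Mmat ** U \<Psi> d x ** Mmat) ** ?MWM ** ?MEM"
    by (simp add: matrix_mul_assoc Mmat_mult_Mmat flip: matrix_mul_assoc[of _ Mmat Mmat])
  have g_outer:
    "g (- int (Suc d)) = mat2 (cos (\<Psi> (Suc d))) (\<i> * sin (\<Psi> (Suc d)) * inverse ((a\<^sup>2) ^ Suc d))
                              (\<i> * sin (\<Psi> (Suc d)) * (a\<^sup>2) ^ Suc d) (cos (\<Psi> (Suc d)))"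
    "g (int (Suc d)) = mat2 (cos (\<Psi> (Suc d))) (\<i> * sin (\<Psi> (Suc d)) * (a\<^sup>2) ^ Suc d)
                              (\<i> * sin (\<Psi> (Suc d)) * inverse ((a\<^sup>2) ^ Suc d)) (cos (\<Psi> (Suc d)))"
    unfolding g_def by (simp_all add: nlft_factor_i_tan[OF cos_pos] power_int_minus del: of_nat_Suc)
  have left: "diag_power a (Suc d) ** g (- int (Suc d)) = ?MEM ** ?MWM ** diag_power a d"
    and right: "g (int (Suc d)) ** diag_power a (Suc d) = diag_power a d ** ?MWM ** ?MEM"
    unfolding g_outer W Mmat_conj_expZ diag_power_def mat2_mult mat2_eq_iff
    using \<open>a \<noteq> 0\<close> by (simp_all add: field_simps power_inverse power_mult_distrib power2_eq_square)
  have "diag_power a (Suc d) ** centered_prod g (Suc d) ** diag_power a (Suc d)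
      = (diag_power a (Suc d) ** g (- int (Suc d))) ** centered_prod g d
          ** (g (int (Suc d)) ** diag_power a (Suc d))"
    by (simp add: centered_prod_Suc matrix_mul_assoc del: of_nat_Suc)
  also have "\<dots> = Mmat ** U \<Psi> (Suc d) x ** Mmat"
    unfolding left right U_Suc_conj Suc by (simp add: matrix_mul_assoc)
  finally show ?case by simp
qed

lemma THE_cos_eq_arccos:
  assumes "0 \<le> x" "x \<le> 1"
  shows "(THE t. t \<in> {0..pi / 2} \<and> cos t = x) = arccos x"
proof (rule the_equality)
  show "arccos x \<in> {0..pi / 2} \<and> cos (arccos x) = x"
    using assms arccos_le_pi2[OF assms] by (auto intro: arccos_lbound cos_arccos)
next
  fix t
  assume "t \<in> {0..pi / 2} \<and> cos t = x"
  then show "t = arccos x"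
    using arccos_cos[of t] pi_gt_zero by auto
qed

lemma Mmat_conj_Wmat_arccos:
  assumes "0 \<le> x" "x \<le> 1"
  defines "a \<equiv> exp (\<i> * complex_of_real (arccos x))"
  shows "Mmat ** Wmat x ** Mmat = mat2 a 0 0 (inverse a)"
proof -
  have cos_sin: "cos (arccos x) = x" "sin (arccos x) = sqrt (1 - x\<^sup>2)"
    using assms by (simp_all add: cos_arccos sin_arccos)
  have "a = x + \<i> * sqrt (1 - x\<^sup>2)"
    unfolding a_def by (simp only: exp_i_real cos_sin)
  moreover have "inverse a = x - \<i> * sqrt (1 - x\<^sup>2)"
    unfolding a_def by (simp only: exp_minus_i_real cos_sin flip: exp_minus mult_minus_left)
  ultimately show ?thesis
    unfolding Mmat_conj_Wmat by simp
qed

theorem lemma4p1: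
  fixes \<Psi> :: "nat \<Rightarrow> real" and d :: nat and x :: real
  assumes "\<And>k. \<Psi> k \<in> {- pi / 2 <..< pi / 2}"
    and "x \<in> {0..1}"
  defines "F \<equiv> (\<lambda>n::int. \<i> * complex_of_real (tan (\<Psi> (nat \<bar>n\<bar>))))"
    and "\<theta> \<equiv> (THE t. t \<in> {0..pi / 2} \<and> cos t = x)"
  defines "z \<equiv> exp (2 * \<i> * complex_of_real \<theta>)"
    and "D \<equiv> mat2 (exp (\<i> * of_nat d * complex_of_real \<theta>)) 0 0 (exp (- \<i> * of_nat d * complex_of_real \<theta>))"
  shows "Mmat ** U \<Psi> d x ** Mmat
           = D ** nlft (\<lambda>n. if - int d \<le> n \<and> n \<le> int d then F n else 0) z ** D"
proof -
  have cos_pos: "cos (\<Psi> k) > 0" for k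
    using assms(1)[of k] by (intro cos_gt_zero_pi) auto
  have x: "0 \<le> x" "x \<le> 1"
    using assms(2) by auto
  define a where "a = exp (\<i> * complex_of_real \<theta>)"
  have "a \<noteq> 0"
    by (simp add: a_def)
  have \<theta>: "\<theta> = arccos x"
    unfolding \<theta>_def using x by (rule THE_cos_eq_arccos)
  have "z = a\<^sup>2" and "D = diag_power a d"
    unfolding z_def D_def a_def diag_power_def
    by (simp_all add: exp_of_nat_mult[symmetric] exp_minus power_inverse mult_ac)
  moreover have "nlft (\<lambda>n. if - int d \<le> n \<and> n \<le> int d then F n else 0) z
                   = centered_prod (\<lambda>k. nlft_factor (F k) k z) d"
    by (subst nlft_eq_centered_prod[of _ d]) (auto split: if_splits intro!: centered_prod_cong)
  moreover have "Mmat ** Wmat x ** Mmat = mat2 a 0 0 (inverse a)"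
    unfolding a_def \<theta> using x by (rule Mmat_conj_Wmat_arccos)
  ultimately show ?thesis
    using Mmat_conj_U_eq_centered_prod[OF cos_pos \<open>a \<noteq> 0\<close>] unfolding F_def by simp
qed

end
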